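(* Let $0<\Delta\le1$ and $T=\frac{\lambda_1}{\Delta}\ln\frac{1}{\Delta}$. There exist constants $C_0,C_1>0$, independent of $P$ and $\Delta$, such that for all $P>0$ the quantizer $q_r$ with these parameters satisfies $$\mathbb{E}[r_{\rm loss}]\le\log_2(1+C_0P\Delta)\le C_1P\Delta.$$
   Context: $H_1,H_2$ are independent exponential random variables with means $\lambda_1\ge\lambda_2>0$ (density $e^{-x/\lambda_i}/\lambda_i$, $x>0$); $P>0$ is the total power. For $a\ge b\ge0$ with $a>0$ let $A(a,b)=\frac{2b}{\sqrt{(a+b)^2+4ab^2P}+a+b}$. Full-CSI maximum minimum rate: $r_{\max}=\log_2(1+PH_1A(H_1,H_2))$ if $H_1\ge H_2$ and $r_{\max}=\log_2(1+PH_2A(H_2,H_1))$ if $H_1<H_2$. Quantizer with parameters $\Delta>0$, $T\ge0$: $q_r(x)=\lfloor x/\Delta\rfloor\Delta$ for $x\le T\Delta$, $q_r(x)=T\Delta$ for $x>T\Delta$. Let $a_i=q_r(H_i)$; if $a_1\ge a_2$ let $(s,w)=(1,2)$, otherwise $(s,w)=(2,1)$. $\alpha_q=A(a_s,a_w)$ if $a_1,a_2>0$, else $\alpha_q=0$. Adapted rates: $r_{s,q}=\log_2(1+P\alpha_qa_s)$, $r_{w,q}=\log_2\big(1+\frac{Pa_w(1-\alpha_q)}{Pa_w\alpha_q+1}\big)$. Rate loss: $r_{\rm loss}=r_{\max}-\min\{r_{1,q},r_{2,q}\}$. *)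

theory Defs
  imports "HOL-Probability.Probability"
begin

definition Acoef :: "real \<Rightarrow> real \<Rightarrow> real \<Rightarrow> real" where
  "Acoef P a b = 2 * b / (sqrt ((a + b)^2 + 4 * a * b^2 * P) + a + b)"

definition rmax :: "real \<Rightarrow> real \<Rightarrow> real \<Rightarrow> real" where
  "rmax P h1 h2 =
     (if h1 \<ge> h2 then log 2 (1 + P * h1 * Acoef P h1 h2)
      else log 2 (1 + P * h2 * Acoef P h2 h1))"

definition qr :: "real \<Rightarrow> real \<Rightarrow> real \<Rightarrow> real" where
  "qr \<Delta> T x = (if x \<le> T * \<Delta> then of_int \<lfloor>x / \<Delta>\<rfloor> * \<Delta> else T * \<Delta>)"

definition rloss :: "real \<Rightarrow> real \<Rightarrow> real \<Rightarrow> real \<Rightarrow> real \<Rightarrow> real" where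
  "rloss P \<Delta> T h1 h2 =
     (let a1 = qr \<Delta> T h1; a2 = qr \<Delta> T h2;
          as = (if a1 \<ge> a2 then a1 else a2);
          aw = (if a1 \<ge> a2 then a2 else a1);
          \<alpha> = (if a1 > 0 \<and> a2 > 0 then Acoef P as aw else 0);
          rs = log 2 (1 + P * \<alpha> * as);
          rw = log 2 (1 + P * aw * (1 - \<alpha>) / (P * aw * \<alpha> + 1))
      in rmax P h1 h2 - min rs rw)"

text \<open>Joint law of (H1,H2): independent exponentials with means l1, l2.\<close>
definition chan_measure :: "real \<Rightarrow> real \<Rightarrow> (real \<times> real) measure" where
  "chan_measure l1 l2 = density (lborel \<Otimes>\<^sub>M lborel)
     (\<lambda>(x, y). ennreal (exponential_density (1 / l1) x * exponential_density (1 / l2) y))"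

end

theory Submission
  imports Defs
begin

text \<open>With the power split \<open>A(a,b)\<close> both users see the same SNR \<open>u(a,b) = P a A(a,b)\<close>,
  the positive root of \<open>u (u + 1) / a + u / b = P\<close>; from this equation \<open>u\<close> is increasing and
  \<open>P\<close>-Lipschitz in each gain. As \<open>q_r\<close> is monotone, quantization lowers the sorted gains by at
  most \<open>2\<Delta>\<close> plus the excesses of the gains over \<open>T\<Delta>\<close>, so
  \<open>0 \<le> r_loss \<le> log\<^sub>2 (1 + P B)\<close> with \<open>B = 2\<Delta> + (H\<^sub>1 - T\<Delta>)\<^sup>+ + (H\<^sub>2 - T\<Delta>)\<^sup>+\<close>.
  For exponential gains \<open>E (H\<^sub>i - T\<Delta>)\<^sup>+ = \<lambda>\<^sub>i exp (-T\<Delta>/\<lambda>\<^sub>i) \<le> \<lambda>\<^sub>i \<Delta>\<close> by the choice of \<open>T\<close>,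
  and Jensen's inequality for the concave \<open>log\<^sub>2 (1 + x)\<close> gives
  \<open>E r_loss \<le> log\<^sub>2 (1 + (2 + \<lambda>\<^sub>1 + \<lambda>\<^sub>2) P \<Delta>)\<close>.\<close>

lemma Acoef_nonneg: "P \<ge> 0 \<Longrightarrow> a \<ge> 0 \<Longrightarrow> b \<ge> 0 \<Longrightarrow> Acoef P a b \<ge> 0"
  unfolding Acoef_def by simp

lemma Acoef_quadratic:
  assumes "P \<ge> 0" "a \<ge> 0" "b > 0"
  shows "P * a * b * (Acoef P a b)\<^sup>2 + (a + b) * Acoef P a b = b"
proof -
  define s where "s = sqrt ((a + b)\<^sup>2 + 4 * a * b\<^sup>2 * P)"
  define d where "d = s + a + b"
  have s2: "s\<^sup>2 = (a + b)\<^sup>2 + 4 * a * b\<^sup>2 * P"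
    unfolding s_def using assms by simp
  have "sqrt ((a + b)\<^sup>2) \<le> s"
    unfolding s_def using assms by (intro real_sqrt_le_mono) simp
  then have d: "d > 0" unfolding d_def using assms by simp
  have key: "P * a * b * (2 * b)\<^sup>2 + (a + b) * (2 * b) * d = b * d\<^sup>2"
    using s2 unfolding d_def by (simp add: power2_eq_square algebra_simps)
  have "P * a * b * (2 * b / d)\<^sup>2 + (a + b) * (2 * b / d)
      = (P * a * b * (2 * b)\<^sup>2 + (a + b) * (2 * b) * d) / d\<^sup>2"
    using d by (simp add: field_simps power2_eq_square)
  also have "\<dots> = b" using key d by simp
  finally show ?thesis unfolding Acoef_def s_def[symmetric] d_def add.assoc .
qed

text \<open>The left side is the SINR of the weak user (gain \<open>b\<close>), the right side the SNR of the
  strong user (gain \<open>a\<close>): the split \<open>A(a,b)\<close> equalizes the two rates.\<close>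
lemma Acoef_rates_equal:
  assumes "P \<ge> 0" "a \<ge> 0" "b > 0"
  shows "P * b * (1 - Acoef P a b) / (P * b * Acoef P a b + 1) = P * Acoef P a b * a"
proof -
  define \<alpha> where "\<alpha> = Acoef P a b"
  have q: "P * a * b * \<alpha>\<^sup>2 + (a + b) * \<alpha> = b"
    unfolding \<alpha>_def using Acoef_quadratic assms by blast
  have "P * b * \<alpha> \<ge> 0" unfolding \<alpha>_def using Acoef_nonneg assms by simp
  moreover have "b * (1 - \<alpha>) = \<alpha> * a * (P * b * \<alpha> + 1)"
    using q by (simp add: algebra_simps power2_eq_square)
  then have "P * b * (1 - \<alpha>) = P * \<alpha> * a * (P * b * \<alpha> + 1)"
    by (metis mult.assoc mult.left_commute)
  ultimately show ?thesis unfolding \<alpha>_def[symmetric] by (simp add: divide_eq_eq)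
qed

definition common_snr :: "real \<Rightarrow> real \<Rightarrow> real \<Rightarrow> real" where
  "common_snr P a b = P * a * Acoef P a b"

lemma common_snr_nonneg: "P \<ge> 0 \<Longrightarrow> a \<ge> 0 \<Longrightarrow> b \<ge> 0 \<Longrightarrow> common_snr P a b \<ge> 0"
  unfolding common_snr_def using Acoef_nonneg by simp

lemma common_snr_equation:
  assumes "P \<ge> 0" "a > 0" "b > 0"
  shows "common_snr P a b * (common_snr P a b + 1) / a + common_snr P a b / b = P"
proof -
  have "P * a * b * (Acoef P a b)\<^sup>2 + (a + b) * Acoef P a b = b"
    using Acoef_quadratic assms by simp
  moreover have "common_snr P a b * (common_snr P a b + 1) / a + common_snr P a b / b
      = P / b * (P * a * b * (Acoef P a b)\<^sup>2 + (a + b) * Acoef P a b)"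
    unfolding common_snr_def using assms by (simp add: field_simps power2_eq_square)
  ultimately show ?thesis using assms by simp
qed

text \<open>The left side of \<open>common_snr_equation\<close> increases in the SNR and decreases in both
  gains; this gives monotonicity and, below, the Lipschitz bounds.\<close>
lemma common_snr_mono:
  assumes P: "P \<ge> 0" and a: "0 < a0" "a0 \<le> a1" and b: "0 < b0" "b0 \<le> b1"
  shows "common_snr P a0 b0 \<le> common_snr P a1 b1"
proof (rule ccontr)
  define x where "x = common_snr P a0 b0"
  define y where "y = common_snr P a1 b1"
  assume "\<not> x \<le> y"
  then have yx: "y < x" by simp
  have y0: "y \<ge> 0" unfolding y_def using common_snr_nonneg assms by simp
  have "y * (y + 1) < x * (x + 1)" using yx y0 by (intro mult_strict_mono) auto
  then have "y * (y + 1) / a0 < x * (x + 1) / a0" using a by (intro divide_strict_right_mono)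
  moreover have "y * (y + 1) / a1 \<le> y * (y + 1) / a0" using a y0 by (intro divide_left_mono) auto
  moreover have "y / b1 \<le> x / b1" using b yx by (intro divide_right_mono) auto
  moreover have "x / b1 \<le> x / b0" using b yx y0 by (intro divide_left_mono) auto
  ultimately show False
    using common_snr_equation[of P a0 b0] common_snr_equation[of P a1 b1] assms
    unfolding x_def y_def by linarith
qed

lemma common_snr_step_weak:
  assumes "P \<ge> 0" "a > 0" "0 < b0" "b0 \<le> b1"
  shows "common_snr P a b1 \<le> common_snr P a b0 + P * (b1 - b0)"
proof -
  define x where "x = common_snr P a b0"
  define y where "y = common_snr P a b1"
  have x0: "x \<ge> 0" unfolding x_def using common_snr_nonneg assms by simp
  have "x \<le> y" unfolding x_def y_def using assms by (intro common_snr_mono) auto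
  then have "x * (x + 1) / a \<le> y * (y + 1) / a"
    using x0 assms by (intro divide_right_mono mult_mono) auto
  then have "y / b1 \<le> x / b0"
    using common_snr_equation[of P a b0] common_snr_equation[of P a b1] assms
    unfolding x_def y_def by linarith
  then have "y \<le> x + x / b0 * (b1 - b0)" using assms by (simp add: field_simps)
  moreover have "x / b0 \<le> P"
    using common_snr_equation[of P a b0] x0 assms unfolding x_def[symmetric]
    by (smt (verit) divide_nonneg_pos mult_nonneg_nonneg)
  then have "x / b0 * (b1 - b0) \<le> P * (b1 - b0)" using assms by (intro mult_right_mono) auto
  ultimately show ?thesis unfolding x_def y_def by linarith
qed

lemma common_snr_step_strong:
  assumes "P \<ge> 0" "b > 0" "0 < a0" "a0 \<le> a1"
  shows "common_snr P a1 b \<le> common_snr P a0 b + P * (a1 - a0)"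
proof -
  define x where "x = common_snr P a0 b"
  define y where "y = common_snr P a1 b"
  have x0: "x \<ge> 0" unfolding x_def using common_snr_nonneg assms by simp
  have xy: "x \<le> y" unfolding x_def y_def using assms by (intro common_snr_mono) auto
  then have "x / b \<le> y / b" using assms by (intro divide_right_mono) auto
  then have "y * (y + 1) / a1 \<le> x * (x + 1) / a0"
    using common_snr_equation[of P a0 b] common_snr_equation[of P a1 b] assms
    unfolding x_def y_def by linarith
  then have "y * (y + 1) \<le> x * (x + 1) + x * (x + 1) / a0 * (a1 - a0)"
    using assms by (simp add: field_simps)
  moreover have "x * (x + 1) / a0 \<le> P"
    using common_snr_equation[of P a0 b] x0 assms unfolding x_def[symmetric]
    by (smt (verit) divide_nonneg_pos)
  then have "x * (x + 1) / a0 * (a1 - a0) \<le> P * (a1 - a0)"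
    using assms by (intro mult_right_mono) auto
  ultimately have "(y - x) * (y + x + 1) \<le> P * (a1 - a0)" by (simp add: algebra_simps)
  moreover have "y - x \<le> (y - x) * (y + x + 1)"
    using xy x0 by (simp add: mult_le_cancel_left1)
  ultimately show ?thesis unfolding x_def y_def by linarith
qed

lemma common_snr_lipschitz:
  assumes "P \<ge> 0" "0 < a0" "a0 \<le> a1" "0 < b0" "b0 \<le> b1"
  shows "common_snr P a1 b1 \<le> common_snr P a0 b0 + P * (a1 - a0) + P * (b1 - b0)"
  using common_snr_step_strong[of P b1 a0 a1] common_snr_step_weak[of P a0 b0 b1] assms by simp

lemma common_snr_le:
  assumes "P \<ge> 0" "a \<ge> 0" "b \<ge> 0"
  shows "common_snr P a b \<le> P * b"
proof (cases "a > 0 \<and> b > 0")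
  case True
  have "common_snr P a b / b \<le> P"
    using common_snr_equation[of P a b] common_snr_nonneg[of P a b] True assms
    by (smt (verit) divide_nonneg_pos mult_nonneg_nonneg)
  then show ?thesis using True by (simp add: divide_le_eq mult.commute)
next
  case False
  then show ?thesis using assms by (auto simp: common_snr_def Acoef_def)
qed

lemma qr_nonneg: "\<Delta> > 0 \<Longrightarrow> T \<ge> 0 \<Longrightarrow> x \<ge> 0 \<Longrightarrow> qr \<Delta> T x \<ge> 0"
  unfolding qr_def by simp

lemma qr_le_self: "\<Delta> > 0 \<Longrightarrow> qr \<Delta> T x \<le> x"
  unfolding qr_def using of_int_floor_le[of "x / \<Delta>"] by (simp add: le_divide_eq)

lemma qr_error:
  assumes "\<Delta> > 0"
  shows "x - qr \<Delta> T x \<le> \<Delta> + max 0 (x - T * \<Delta>)"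
proof -
  have "x / \<Delta> < of_int \<lfloor>x / \<Delta>\<rfloor> + 1" by (rule real_of_int_floor_add_one_gt)
  then have "x / \<Delta> * \<Delta> < (of_int \<lfloor>x / \<Delta>\<rfloor> + 1) * \<Delta>"
    using assms by (rule mult_strict_right_mono)
  then have "x < (of_int \<lfloor>x / \<Delta>\<rfloor> + 1) * \<Delta>" using assms by simp
  then show ?thesis unfolding qr_def using assms by (simp add: algebra_simps)
qed

lemma mono_qr:
  assumes "\<Delta> > 0"
  shows "mono (qr \<Delta> T)"
proof
  fix x y :: real
  assume "x \<le> y"
  then have "\<lfloor>x / \<Delta>\<rfloor> \<le> \<lfloor>y / \<Delta>\<rfloor>" using assms by (intro floor_mono divide_right_mono) auto
  then have "of_int \<lfloor>x / \<Delta>\<rfloor> * \<Delta> \<le> of_int \<lfloor>y / \<Delta>\<rfloor> * \<Delta>" using assms by simp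
  moreover have "of_int \<lfloor>x / \<Delta>\<rfloor> * \<Delta> \<le> x"
    using assms of_int_floor_le[of "x / \<Delta>"] by (simp add: le_divide_eq)
  ultimately show "qr \<Delta> T x \<le> qr \<Delta> T y" unfolding qr_def using \<open>x \<le> y\<close> by auto
qed

lemma log_common_snr_gap:
  assumes P: "P \<ge> 0" and "0 \<le> m0" "m0 \<le> m" "m0 \<le> M0" "M0 \<le> M"
  defines "gap \<equiv> log 2 (1 + common_snr P M m) -
    (if m0 > 0 then log 2 (1 + common_snr P M0 m0) else 0)"
  shows "0 \<le> gap" and "gap \<le> log 2 (1 + P * ((M - M0) + (m - m0)))"
proof -
  have u: "common_snr P M m \<ge> 0" using common_snr_nonneg assms by simp
  have E: "P * ((M - M0) + (m - m0)) \<ge> 0" using assms by simp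
  have "0 \<le> gap \<and> gap \<le> log 2 (1 + P * ((M - M0) + (m - m0)))"
  proof (cases "m0 > 0")
    case True
    define u0 where "u0 = common_snr P M0 m0"
    have u0: "u0 \<ge> 0" unfolding u0_def using common_snr_nonneg assms by simp
    have "u0 \<le> common_snr P M m" unfolding u0_def using True assms by (intro common_snr_mono) auto
    then have "0 \<le> gap" unfolding gap_def u0_def[symmetric] using True u0 by simp
    have "common_snr P M m \<le> u0 + P * ((M - M0) + (m - m0))"
      using common_snr_lipschitz[of P M0 M m0 m] True assms unfolding u0_def
      by (simp add: algebra_simps)
    also have "\<dots> \<le> u0 + P * ((M - M0) + (m - m0)) + u0 * (P * ((M - M0) + (m - m0)))"
      using u0 E by simp
    finally have "1 + common_snr P M m \<le> (1 + u0) * (1 + P * ((M - M0) + (m - m0)))"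
      by (simp add: algebra_simps)
    then have "log 2 (1 + common_snr P M m) \<le> log 2 ((1 + u0) * (1 + P * ((M - M0) + (m - m0))))"
      using u by simp
    then have "log 2 (1 + common_snr P M m) \<le> log 2 (1 + u0) + log 2 (1 + P * ((M - M0) + (m - m0)))"
      using u0 E by (simp add: log_mult)
    then show ?thesis using \<open>0 \<le> gap\<close> True unfolding gap_def u0_def by simp
  next
    case False
    have "common_snr P M m \<le> P * ((M - M0) + (m - m0))"
      using common_snr_le[of P M m] False assms by (smt (verit) mult_left_mono)
    then show ?thesis using False u E unfolding gap_def by simp
  qed
  then show "0 \<le> gap" and "gap \<le> log 2 (1 + P * ((M - M0) + (m - m0)))" by auto
qed

lemma rmax_eq_common_snr: "rmax P h1 h2 = log 2 (1 + common_snr P (max h1 h2) (min h1 h2))"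
  unfolding rmax_def common_snr_def by (auto simp: max_def min_def)

text \<open>Since \<open>q_r\<close> is monotone, the quantized strong and weak gains are the quantized
  maximum and minimum of the true gains; the two adapted rates coincide.\<close>
lemma rloss_eq_common_snr:
  assumes "P \<ge> 0" "\<Delta> > 0" "T \<ge> 0" "h1 \<ge> 0" "h2 \<ge> 0"
  defines "M \<equiv> max h1 h2" and "m \<equiv> min h1 h2"
  shows "rloss P \<Delta> T h1 h2 = log 2 (1 + common_snr P M m) -
    (if qr \<Delta> T m > 0 then log 2 (1 + common_snr P (qr \<Delta> T M) (qr \<Delta> T m)) else 0)"
proof -
  define a1 a2 where "a1 = qr \<Delta> T h1" and "a2 = qr \<Delta> T h2"
  have strong: "(if a1 \<ge> a2 then a1 else a2) = qr \<Delta> T M"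
    unfolding M_def a1_def a2_def max_of_mono[OF mono_qr[OF assms(2)], symmetric] by auto
  have weak: "(if a1 \<ge> a2 then a2 else a1) = qr \<Delta> T m"
    unfolding m_def a1_def a2_def min_of_mono[OF mono_qr[OF assms(2)], symmetric] by auto
  have both_pos: "(a1 > 0 \<and> a2 > 0) = (qr \<Delta> T m > 0)"
    unfolding m_def a1_def a2_def min_of_mono[OF mono_qr[OF assms(2)], symmetric] by auto
  have m0: "qr \<Delta> T m \<ge> 0" unfolding m_def using qr_nonneg assms by simp
  define as aw where "as = qr \<Delta> T M" and "aw = qr \<Delta> T m"
  have r: "rloss P \<Delta> T h1 h2 = log 2 (1 + common_snr P M m) -
      min (log 2 (1 + P * (if aw > 0 then Acoef P as aw else 0) * as))
        (log 2 (1 + P * aw * (1 - (if aw > 0 then Acoef P as aw else 0))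
          / (P * aw * (if aw > 0 then Acoef P as aw else 0) + 1)))"
    unfolding rloss_def Let_def a1_def[symmetric] a2_def[symmetric] strong weak both_pos rmax_eq_common_snr
      as_def aw_def M_def m_def ..
  show ?thesis
  proof (cases "aw > 0")
    case True
    have "P * aw * (1 - Acoef P as aw) / (P * aw * Acoef P as aw + 1) = P * Acoef P as aw * as"
      using Acoef_rates_equal[of P as aw] True assms m0 unfolding as_def aw_def M_def
      by (simp add: qr_nonneg)
    moreover have "P * Acoef P as aw * as = common_snr P as aw"
      unfolding common_snr_def by (simp add: mult_ac)
    ultimately show ?thesis using r True unfolding as_def aw_def by simp
  next
    case False
    then show ?thesis using r m0 assms unfolding aw_def by (simp add: min_def)
  qed
qed

lemma rloss_bounds:
  assumes "P \<ge> 0" "\<Delta> > 0" "T \<ge> 0" "h1 \<ge> 0" "h2 \<ge> 0"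
  defines "B \<equiv> 2 * \<Delta> + max 0 (h1 - T * \<Delta>) + max 0 (h2 - T * \<Delta>)"
  shows "0 \<le> rloss P \<Delta> T h1 h2" and "rloss P \<Delta> T h1 h2 \<le> log 2 (1 + P * B)"
proof -
  define M m where "M = max h1 h2" and "m = min h1 h2"
  have "0 \<le> m" "m \<le> M" unfolding M_def m_def using assms by auto
  then have q: "0 \<le> qr \<Delta> T m" "qr \<Delta> T m \<le> m" "qr \<Delta> T m \<le> qr \<Delta> T M" "qr \<Delta> T M \<le> M"
    using qr_nonneg[of \<Delta> T m] qr_le_self[of \<Delta> T] mono_qr[THEN monoD, of \<Delta> m M T] assms
    by auto
  note gap = log_common_snr_gap[OF assms(1) q, folded rloss_eq_common_snr[OF assms(1-5), folded M_def m_def]]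
  show "0 \<le> rloss P \<Delta> T h1 h2" by (rule gap(1))
  have "(M - qr \<Delta> T M) + (m - qr \<Delta> T m) \<le> B"
    using qr_error[OF assms(2), of M T] qr_error[OF assms(2), of m T] unfolding M_def m_def B_def
    by (auto simp: max_def min_def)
  then have "P * ((M - qr \<Delta> T M) + (m - qr \<Delta> T m)) \<le> P * B"
    using assms by (intro mult_left_mono) auto
  moreover have "0 \<le> P * ((M - qr \<Delta> T M) + (m - qr \<Delta> T m))" using q assms by simp
  ultimately have "log 2 (1 + P * ((M - qr \<Delta> T M) + (m - qr \<Delta> T m))) \<le> log 2 (1 + P * B)"
    by simp
  with gap(2) show "rloss P \<Delta> T h1 h2 \<le> log 2 (1 + P * B)" by linarith
qed

lemma log2_one_plus_le: "x \<ge> 0 \<Longrightarrow> log 2 (1 + x) \<le> x / ln 2"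
  unfolding log_def using ln_add_one_self_le_self[of x] by (simp add: divide_right_mono)

lemma (in prob_space) integral_log2_one_plus_le:
  assumes f: "integrable M f" and nonneg: "AE x in M. f x \<ge> 0"
  shows "integrable M (\<lambda>x. log 2 (1 + f x))"
    and "(\<integral>x. log 2 (1 + f x) \<partial>M) \<le> log 2 (1 + (\<integral>x. f x \<partial>M))"
proof -
  have [measurable]: "f \<in> borel_measurable M" using f by simp
  have bound: "AE x in M. norm (log 2 (1 + f x)) \<le> norm (f x / ln 2)"
    using nonneg by eventually_elim (simp add: log2_one_plus_le)
  show int: "integrable M (\<lambda>x. log 2 (1 + f x))"
    by (rule Bochner_Integration.integrable_bound[OF _ _ bound]) (use f in auto)
  have "- log 2 (expectation (\<lambda>x. 1 + f x)) \<le> expectation (\<lambda>x. - log 2 (1 + f x))"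
    by (rule jensens_inequality[where I = "{0<..}" and a = 0])
      (use f nonneg int in \<open>auto intro: minus_log_convex elim!: AE_mp\<close>)
  then show "(\<integral>x. log 2 (1 + f x) \<partial>M) \<le> log 2 (1 + (\<integral>x. f x \<partial>M))"
    using f by (simp add: prob_space)
qed

lemma (in prob_space) integral_le_log2_one_plus_integral:
  assumes R [measurable]: "R \<in> borel_measurable M" and B: "integrable M B" "AE x in M. 0 \<le> B x"
    and P: "P \<ge> 0" and bounds: "AE x in M. 0 \<le> R x \<and> R x \<le> log 2 (1 + P * B x)"
  shows "integrable M R" and "(\<integral>x. R x \<partial>M) \<le> log 2 (1 + P * (\<integral>x. B x \<partial>M))"
proof -
  have PB: "integrable M (\<lambda>x. P * B x)" "AE x in M. 0 \<le> P * B x"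
    using B P by auto
  note jensen = integral_log2_one_plus_le[OF PB]
  show intR: "integrable M R"
    by (rule Bochner_Integration.integrable_bound[OF jensen(1) R]) (use bounds in \<open>auto elim!: AE_mp\<close>)
  have "(\<integral>x. R x \<partial>M) \<le> (\<integral>x. log 2 (1 + P * B x) \<partial>M)"
    using bounds by (intro integral_mono_AE intR jensen(1)) (auto elim!: AE_mp)
  also have "\<dots> \<le> log 2 (1 + P * (\<integral>x. B x \<partial>M))"
    using jensen(2) B by simp
  finally show "(\<integral>x. R x \<partial>M) \<le> log 2 (1 + P * (\<integral>x. B x \<partial>M))" .
qed

lemma has_bochner_integral_exponential_excess:
  fixes \<mu> c :: real
  assumes mu: "0 < \<mu>" and c: "0 \<le> c"
  shows "has_bochner_integral (density lborel (exponential_density \<mu>)) (\<lambda>x. max 0 (x - c))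
    (exp (- c * \<mu>) / \<mu>)"
proof (rule has_bochner_integral_nn_integral)
  \<comment> \<open>memorylessness: beyond \<open>c\<close> the density is the original one scaled by \<open>exp (- c \<mu>)\<close>\<close>
  have shift: "ennreal (exponential_density \<mu> (c + x)) * ennreal (max 0 (c + x - c))
      = ennreal (exp (- c * \<mu>)) * ennreal (exponential_density \<mu> x * x ^ 1)" for x
    using mu c by (cases "x < 0")
      (auto simp: exponential_density_def ennreal_mult[symmetric] exp_add[symmetric] algebra_simps)
  have "(\<integral>\<^sup>+x. ennreal (max 0 (x - c)) \<partial>density lborel (exponential_density \<mu>))
      = (\<integral>\<^sup>+x. ennreal (exponential_density \<mu> x) * ennreal (max 0 (x - c)) \<partial>lborel)"
    by (subst nn_integral_density) auto
  also have "\<dots> = (\<integral>\<^sup>+x. ennreal (exponential_density \<mu> (c + x)) * ennreal (max 0 (c + x - c)) \<partial>lborel)"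
    using nn_integral_real_affine[of "\<lambda>x. ennreal (exponential_density \<mu> x) * ennreal (max 0 (x - c))" 1 c]
    by simp
  also have "\<dots> = ennreal (exp (- c * \<mu>)) * (\<integral>\<^sup>+x. ennreal (exponential_density \<mu> x * x ^ 1) \<partial>lborel)"
    unfolding shift by (rule nn_integral_cmult) auto
  also have "\<dots> = ennreal (exp (- c * \<mu>) / \<mu>)"
    using nn_integral_erlang_ith_moment[OF mu, of 0 1] mu
    by (simp add: ennreal_mult[symmetric] divide_ennreal)
  finally show "(\<integral>\<^sup>+x. ennreal (max 0 (x - c)) \<partial>density lborel (exponential_density \<mu>))
      = ennreal (exp (- c * \<mu>) / \<mu>)" .
qed (use mu in auto)

lemma chan_measure_eq_pair:
  assumes "l1 > 0" "l2 > 0"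
  shows "chan_measure l1 l2 =
    density lborel (exponential_density (1 / l1)) \<Otimes>\<^sub>M density lborel (exponential_density (1 / l2))"
proof -
  have "sigma_finite_measure (density lborel (exponential_density (1 / l2)))"
    using assms by (intro prob_space_imp_sigma_finite prob_space_exponential_density) simp
  then have "density lborel (exponential_density (1 / l1)) \<Otimes>\<^sub>M density lborel (exponential_density (1 / l2))
      = density (lborel \<Otimes>\<^sub>M lborel)
          (\<lambda>(x, y). ennreal (exponential_density (1 / l1) x) * ennreal (exponential_density (1 / l2) y))"
    by (intro pair_measure_density) (auto intro: lborel.sigma_finite_measure_axioms)
  also have "\<dots> = chan_measure l1 l2" unfolding chan_measure_def
    by (intro density_cong) (auto simp: ennreal_mult exponential_density_nonneg assms)
  finally show ?thesis ..
qed

lemma distr_pair_snd: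
  assumes "prob_space M1" "sigma_finite_measure M2"
  shows "distr (M1 \<Otimes>\<^sub>M M2) M2 snd = M2"
proof (intro measure_eqI)
  interpret M2: sigma_finite_measure M2 by fact
  interpret M1: prob_space M1 by fact
  fix A assume A: "A \<in> sets (distr (M1 \<Otimes>\<^sub>M M2) M2 snd)"
  then have "emeasure (distr (M1 \<Otimes>\<^sub>M M2) M2 snd) A = emeasure (M1 \<Otimes>\<^sub>M M2) (space M1 \<times> A)"
    by (auto simp: emeasure_distr space_pair_measure dest: sets.sets_into_space
        intro!: arg_cong2[where f=emeasure])
  with A show "emeasure (distr (M1 \<Otimes>\<^sub>M M2) M2 snd) A = emeasure M2 A"
    by (simp add: M2.emeasure_pair_measure_Times M1.emeasure_space_1)
qed simp

lemma has_bochner_integral_distrD: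
  fixes f :: "'b \<Rightarrow> real"
  assumes "g \<in> measurable M N" "has_bochner_integral (distr M N g) f I"
  shows "has_bochner_integral M (\<lambda>x. f (g x)) I"
  using assms borel_measurable_has_bochner_integral[OF assms(2)]
  by (simp add: has_bochner_integral_iff integrable_distr_eq integral_distr)

lemma has_bochner_integral_pair_fst:
  fixes f :: "'a \<Rightarrow> real"
  assumes "prob_space M2" "has_bochner_integral M1 f I"
  shows "has_bochner_integral (M1 \<Otimes>\<^sub>M M2) (\<lambda>x. f (fst x)) I"
  by (rule has_bochner_integral_distrD[where N = M1])
    (simp_all add: assms(2) prob_space.distr_pair_fst[OF assms(1)])

lemma has_bochner_integral_pair_snd:
  fixes f :: "'b \<Rightarrow> real"
  assumes "prob_space M1" "sigma_finite_measure M2" "has_bochner_integral M2 f I"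
  shows "has_bochner_integral (M1 \<Otimes>\<^sub>M M2) (\<lambda>x. f (snd x)) I"
  by (rule has_bochner_integral_distrD[where N = M2])
    (simp_all add: assms(3) distr_pair_snd[OF assms(1,2)])

lemma AE_chan_measure_nonneg: "AE h in chan_measure l1 l2. fst h \<ge> 0 \<and> snd h \<ge> 0"
  unfolding chan_measure_def
  by (subst AE_density) (auto simp: exponential_density_def split: if_splits intro!: AE_I2)

lemma qr_measurable [measurable]: "qr \<Delta> T \<in> borel_measurable borel"
  unfolding qr_def by measurable

lemma Acoef_measurable [measurable]:
  "(\<lambda>x. Acoef P (f x) (g x)) \<in> borel_measurable M"
  if [measurable]: "f \<in> borel_measurable M" "g \<in> borel_measurable M"
  unfolding Acoef_def by measurable

lemma rloss_measurable [measurable]: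
  "(\<lambda>(h1, h2). rloss P \<Delta> T h1 h2) \<in> borel_measurable (chan_measure l1 l2)"
  unfolding chan_measure_def rloss_def Let_def rmax_def by measurable

lemma integral_chan_measure_excess_le:
  assumes "l2 \<le> l1" "0 < l2" "0 < \<Delta>" "\<Delta> \<le> 1"
  defines "c \<equiv> l1 * ln (1 / \<Delta>)"
  shows "integrable (chan_measure l1 l2) (\<lambda>h. max 0 (fst h - c) + max 0 (snd h - c))"
    and "(\<integral>h. max 0 (fst h - c) + max 0 (snd h - c) \<partial>chan_measure l1 l2) \<le> (l1 + l2) * \<Delta>"
proof -
  define E where "E l = density lborel (exponential_density (1 / l))" for l
  have c: "c \<ge> 0" unfolding c_def using assms by simp
  have tail: "exp (- c * (1 / l)) / (1 / l) \<le> l * \<Delta>" if "0 < l" "l \<le> l1" for l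
  proof -
    have "ln (1 / \<Delta>) \<le> c / l"
      unfolding c_def using that assms by (simp add: field_simps mult_right_mono)
    then have "- c * (1 / l) \<le> ln \<Delta>" using assms that by (simp add: ln_div)
    then show ?thesis using that assms by (simp add: ln_ge_iff)
  qed
  have prob: "prob_space (E l)" if "0 < l" for l
    unfolding E_def using that by (intro prob_space_exponential_density) simp
  have excess: "has_bochner_integral (E l) (\<lambda>x. max 0 (x - c)) (exp (- c * (1 / l)) / (1 / l))"
    if "0 < l" for l
    unfolding E_def using that c by (intro has_bochner_integral_exponential_excess) auto
  have "has_bochner_integral (E l1 \<Otimes>\<^sub>M E l2) (\<lambda>h. max 0 (fst h - c) + max 0 (snd h - c))
      (exp (- c * (1 / l1)) / (1 / l1) + exp (- c * (1 / l2)) / (1 / l2))"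
    by (intro has_bochner_integral_add has_bochner_integral_pair_fst[OF prob]
        has_bochner_integral_pair_snd[OF prob prob_space_imp_sigma_finite[OF prob]] excess)
      (use assms in auto)
  then have int: "has_bochner_integral (chan_measure l1 l2)
      (\<lambda>h. max 0 (fst h - c) + max 0 (snd h - c))
      (exp (- c * (1 / l1)) / (1 / l1) + exp (- c * (1 / l2)) / (1 / l2))"
    using chan_measure_eq_pair[of l1 l2] assms unfolding E_def by simp
  then show "integrable (chan_measure l1 l2) (\<lambda>h. max 0 (fst h - c) + max 0 (snd h - c))"
    by (rule integrable.intros)
  show "(\<integral>h. max 0 (fst h - c) + max 0 (snd h - c) \<partial>chan_measure l1 l2) \<le> (l1 + l2) * \<Delta>"
    using has_bochner_integral_integral_eq[OF int] tail[of l1] tail[of l2] assms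
      distrib_right[of l1 l2 \<Delta>] by linarith
qed

lemma expected_rloss_le:
  assumes "l2 \<le> l1" "0 < l2" "0 < P" "0 < \<Delta>" "\<Delta> \<le> 1"
  defines "T \<equiv> l1 / \<Delta> * ln (1 / \<Delta>)"
  shows "integrable (chan_measure l1 l2) (\<lambda>(h1, h2). rloss P \<Delta> T h1 h2)"
    and "(\<integral>(h1, h2). rloss P \<Delta> T h1 h2 \<partial>chan_measure l1 l2) \<le> log 2 (1 + (2 + l1 + l2) * P * \<Delta>)"
proof -
  define c where "c = l1 * ln (1 / \<Delta>)"
  define B where "B h = 2 * \<Delta> + max 0 (fst h - c) + max 0 (snd h - c)" for h :: "real \<times> real"
  let ?M = "chan_measure l1 l2" and ?R = "\<lambda>(h1, h2). rloss P \<Delta> T h1 h2"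
  have "0 < l1" using assms by simp
  interpret prob_space ?M
    unfolding chan_measure_eq_pair[OF \<open>0 < l1\<close> assms(2)]
    using assms by (intro prob_space_pair prob_space_exponential_density) auto
  have T: "T \<ge> 0" "T * \<Delta> = c"
    unfolding T_def c_def using assms by simp_all
  have intB: "integrable ?M B"
    unfolding B_def using integral_chan_measure_excess_le(1)[OF assms(1-2,4-5)] c_def
    by (simp add: add.assoc)
  have "integral\<^sup>L ?M B = 2 * \<Delta> + (\<integral>h. max 0 (fst h - c) + max 0 (snd h - c) \<partial>?M)"
    unfolding B_def using integral_chan_measure_excess_le(1)[OF assms(1-2,4-5)] c_def
    by (simp add: add.assoc prob_space)
  also have "\<dots> \<le> 2 * \<Delta> + (l1 + l2) * \<Delta>"
    using integral_chan_measure_excess_le(2)[OF assms(1-2,4-5)] c_def by simp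
  finally have IB: "integral\<^sup>L ?M B \<le> (2 + l1 + l2) * \<Delta>" by (simp add: algebra_simps)
  have B0: "0 \<le> B h" for h unfolding B_def using assms by simp
  have bounds: "AE h in ?M. 0 \<le> ?R h \<and> ?R h \<le> log 2 (1 + P * B h)"
    using AE_chan_measure_nonneg
  proof eventually_elim
    case (elim h)
    then show ?case
      using rloss_bounds[of P \<Delta> T "fst h" "snd h"] assms T unfolding B_def
      by (auto simp: case_prod_beta)
  qed
  note main = integral_le_log2_one_plus_integral[OF rloss_measurable intB _ _ bounds]
  show "integrable ?M ?R" using main(1) B0 assms by simp
  have "integral\<^sup>L ?M ?R \<le> log 2 (1 + P * integral\<^sup>L ?M B)"
    using main(2) B0 assms by simp
  also have "\<dots> \<le> log 2 (1 + (2 + l1 + l2) * P * \<Delta>)"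
  proof -
    have "0 \<le> P * integral\<^sup>L ?M B" using B0 assms by simp
    moreover have "P * integral\<^sup>L ?M B \<le> P * ((2 + l1 + l2) * \<Delta>)"
      using IB assms by (intro mult_left_mono) auto
    ultimately show ?thesis by (simp add: mult_ac)
  qed
  finally show "integral\<^sup>L ?M ?R \<le> log 2 (1 + (2 + l1 + l2) * P * \<Delta>)" .
qed

theorem corollary1:
  fixes l1 l2 :: real
  assumes "l1 \<ge> l2" and "l2 > 0"
  shows "\<exists>C0 C1. C0 > 0 \<and> C1 > 0 \<and>
    (\<forall>P \<Delta>. P > 0 \<longrightarrow> 0 < \<Delta> \<longrightarrow> \<Delta> \<le> 1 \<longrightarrow>
       (let T = l1 / \<Delta> * ln (1 / \<Delta>) in
          integrable (chan_measure l1 l2) (\<lambda>(h1, h2). rloss P \<Delta> T h1 h2) \<and>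
          (\<integral>(h1, h2). rloss P \<Delta> T h1 h2 \<partial>chan_measure l1 l2) \<le> log 2 (1 + C0 * P * \<Delta>) \<and>
          log 2 (1 + C0 * P * \<Delta>) \<le> C1 * P * \<Delta>))"
proof (intro exI conjI allI impI)
  define C0 where "C0 = 2 + l1 + l2"
  show "C0 > 0" "C0 / ln 2 > 0" unfolding C0_def using assms by simp_all
  fix P \<Delta> :: real
  assume "P > 0" "0 < \<Delta>" "\<Delta> \<le> 1"
  moreover have "log 2 (1 + C0 * P * \<Delta>) \<le> C0 / ln 2 * P * \<Delta>"
    using log2_one_plus_le[of "C0 * P * \<Delta>"] \<open>C0 > 0\<close> calculation by simp
  ultimately show "let T = l1 / \<Delta> * ln (1 / \<Delta>) in
      integrable (chan_measure l1 l2) (\<lambda>(h1, h2). rloss P \<Delta> T h1 h2) \<and>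
      (\<integral>(h1, h2). rloss P \<Delta> T h1 h2 \<partial>chan_measure l1 l2) \<le> log 2 (1 + C0 * P * \<Delta>) \<and>
      log 2 (1 + C0 * P * \<Delta>) \<le> C0 / ln 2 * P * \<Delta>"
    using expected_rloss_le[OF assms] unfolding C0_def Let_def by simp
qed

end
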